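(* Let $n,m\ge1$, let $K_n$ be the ordered complete graph on $n$ vertices, and let $P_m$ be a path on $m$ vertices with an arbitrary total order on its vertices. Then $R_o(K_n,P_m)\le 2^{\lceil\log_2 n\rceil\cdot(\lceil\log_2 m\rceil+1)}$.
   Context: An ordered graph is a graph with a total order $\prec$ on its vertices. An ordered graph $F$ is contained in an ordered graph $H$ if there is an injective map $V(F)\to V(H)$ preserving both the vertex order and adjacency. The ordered Ramsey number $R_o(F,G)$ is the smallest $N$ such that every red/blue colouring of the edges of the ordered complete graph $K_N$ contains a blue copy of $F$ or a red copy of $G$. *)

theory Defs
  imports Complex_Main
begin

text \<open>An ordered graph on k vertices is represented by the vertex set {0..<k} with the
natural order of nat and a (symmetric) edge relation E. A red/blue colouring of the
ordered complete graph K_N is a function c, where c i j for i < j < N is the colour of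
the edge {i,j}: True = blue, False = red.\<close>

definition mono_copy :: "nat \<Rightarrow> (nat \<Rightarrow> nat \<Rightarrow> bool) \<Rightarrow> nat \<Rightarrow> (nat \<Rightarrow> nat \<Rightarrow> bool) \<Rightarrow> bool \<Rightarrow> bool" where
  "mono_copy k E N c b \<longleftrightarrow>
     (\<exists>f. (\<forall>i<k. f i < N) \<and> (\<forall>i j. i < j \<and> j < k \<longrightarrow> f i < f j) \<and>
          (\<forall>i j. i < j \<and> j < k \<and> E i j \<longrightarrow> c (f i) (f j) = b))"

definition ordered_ramsey :: "nat \<Rightarrow> (nat \<Rightarrow> nat \<Rightarrow> bool) \<Rightarrow> nat \<Rightarrow> (nat \<Rightarrow> nat \<Rightarrow> bool) \<Rightarrow> nat" where
  "ordered_ramsey k1 E1 k2 E2 =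
     (LEAST N. \<forall>c. mono_copy k1 E1 N c True \<or> mono_copy k2 E2 N c False)"

definition complete_edges :: "nat \<Rightarrow> nat \<Rightarrow> bool" where
  "complete_edges i j \<longleftrightarrow> i \<noteq> j"

text \<open>Path on m vertices visiting the vertices in the sequence s 0, s 1, ..., s (m-1)
(s a permutation of {0..<m}); the vertex order is the natural order of nat, so the
choice of s encodes an arbitrary total order on the path's vertices.\<close>

definition path_edges :: "nat \<Rightarrow> (nat \<Rightarrow> nat) \<Rightarrow> nat \<Rightarrow> nat \<Rightarrow> bool" where
  "path_edges m s i j \<longleftrightarrow> (\<exists>t. Suc t < m \<and> {i, j} = {s t, s (Suc t)})"

end

theory Submission
  imports Defs "HOL-Library.Infinite_Set"
begin

text \<open>Suppose every \<open>N\<close> vertices of a red/blue coloured ordered complete graph contain a blue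
\<open>K\<^sub>k\<close> or a red copy of the ordered path \<open>P\<close> on \<open>m\<close> vertices. Given \<open>2mN\<close> vertices, cut them
into \<open>m\<close> consecutive blocks of \<open>2N\<close> vertices, block \<open>r\<close> hosting the \<open>r\<close>-th vertex of \<open>P\<close>, and
grow red walks block by block in the order in which \<open>P\<close> visits its vertices. If there is no
blue \<open>K\<^sub>2\<^sub>k\<close>, then for every set \<open>A\<close> of at least \<open>N\<close> vertices fewer than \<open>N\<close> vertices outside
\<open>A\<close> are blue to all of \<open>A\<close>, since otherwise a blue \<open>K\<^sub>k\<close> in \<open>A\<close> and one among those vertices
would form a blue \<open>K\<^sub>2\<^sub>k\<close>. So at every step more than \<open>N\<close> vertices of the next block are ends
of red walks, and a walk through all \<open>m\<close> blocks is a red copy of \<open>P\<close>. Starting from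
\<open>k = N = 1\<close>, each doubling of \<open>k\<close> multiplies \<open>N\<close> by \<open>2m\<close>, so \<open>\<lceil>log\<^sub>2 n\<rceil>\<close> doublings give
\<open>R\<^sub>o(K\<^sub>n, P) \<le> (2m)^\<lceil>log\<^sub>2 n\<rceil>\<close>.\<close>

definition edge_colour :: "(nat \<Rightarrow> nat \<Rightarrow> bool) \<Rightarrow> nat \<Rightarrow> nat \<Rightarrow> bool" where
  "edge_colour c u v = (if u < v then c u v else c v u)"

lemma edge_colour_commute: "edge_colour c u v = edge_colour c v u"
  unfolding edge_colour_def by (cases u v rule: linorder_cases) auto

definition blue_clique :: "(nat \<Rightarrow> nat \<Rightarrow> bool) \<Rightarrow> nat set \<Rightarrow> bool" where
  "blue_clique c S \<longleftrightarrow> (\<forall>u\<in>S. \<forall>v\<in>S. u < v \<longrightarrow> c u v)"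

definition red_path_in :: "nat \<Rightarrow> (nat \<Rightarrow> nat) \<Rightarrow> (nat \<Rightarrow> nat \<Rightarrow> bool) \<Rightarrow> nat set \<Rightarrow> bool" where
  "red_path_in m s c X \<longleftrightarrow>
     (\<exists>f. (\<forall>i<m. f i \<in> X) \<and> (\<forall>i j. i < j \<and> j < m \<longrightarrow> f i < f j) \<and>
          (\<forall>i j. i < j \<and> j < m \<and> path_edges m s i j \<longrightarrow> \<not> c (f i) (f j)))"

text \<open>\<open>R\<^sub>o(K\<^sub>k, P) \<le> N\<close> for the ordered path \<open>P\<close>, relativised to arbitrary finite vertex
sets so that it can be applied inside subsets of the vertices.\<close>

definition clique_or_path :: "nat \<Rightarrow> (nat \<Rightarrow> nat) \<Rightarrow> nat \<Rightarrow> nat \<Rightarrow> bool" where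
  "clique_or_path m s k N \<longleftrightarrow>
     (\<forall>c X. finite X \<longrightarrow> N \<le> card X \<longrightarrow>
        (\<exists>S\<subseteq>X. card S = k \<and> blue_clique c S) \<or> red_path_in m s c X)"

definition common_blue_nbhd :: "(nat \<Rightarrow> nat \<Rightarrow> bool) \<Rightarrow> nat set \<Rightarrow> nat set \<Rightarrow> nat set" where
  "common_blue_nbhd c X A = {v \<in> X - A. \<forall>u\<in>A. edge_colour c u v}"

definition red_walk_ends :: "(nat \<Rightarrow> nat \<Rightarrow> bool) \<Rightarrow> (nat \<Rightarrow> nat set) \<Rightarrow> nat \<Rightarrow> nat set" where
  "red_walk_ends c B t =
     {w t | w. (\<forall>i\<le>t. w i \<in> B i) \<and> (\<forall>i<t. \<not> edge_colour c (w i) (w (Suc i)))}"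

lemma red_path_in_mono: "red_path_in m s c Y \<Longrightarrow> Y \<subseteq> X \<Longrightarrow> red_path_in m s c X"
  unfolding red_path_in_def by (elim exE, intro exI) auto

lemma clique_or_pathD:
  "clique_or_path m s k N \<Longrightarrow> finite X \<Longrightarrow> N \<le> card X \<Longrightarrow>
     (\<exists>S\<subseteq>X. card S = k \<and> blue_clique c S) \<or> red_path_in m s c X"
  unfolding clique_or_path_def by simp

lemma common_blue_nbhd_subset: "common_blue_nbhd c X A \<subseteq> X"
  unfolding common_blue_nbhd_def by auto

lemma blue_clique_Un:
  assumes "blue_clique c S" "blue_clique c T" "\<forall>u\<in>S. \<forall>v\<in>T. edge_colour c u v"
  shows "blue_clique c (S \<union> T)"
  using assms unfolding blue_clique_def edge_colour_def
  by (smt (verit) Un_iff not_less_iff_gr_or_eq)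

lemma common_blue_nbhd_small:
  assumes IH: "clique_or_path m s k N" and "finite X"
    and no_clique: "\<not> (\<exists>S\<subseteq>X. card S = 2 * k \<and> blue_clique c S)"
    and no_path: "\<not> red_path_in m s c X"
    and "A \<subseteq> X" "N \<le> card A"
  shows "card (common_blue_nbhd c X A) < N"
proof (rule ccontr)
  let ?D = "common_blue_nbhd c X A"
  have clique_in: "\<exists>S\<subseteq>Y. card S = k \<and> blue_clique c S" if "Y \<subseteq> X" "N \<le> card Y" for Y
    using clique_or_pathD[OF IH finite_subset[OF that(1) \<open>finite X\<close>] that(2)]
      red_path_in_mono[OF _ that(1)] no_path by blast
  have "?D \<subseteq> X" by (rule common_blue_nbhd_subset)
  moreover assume "\<not> card ?D < N"
  ultimately obtain T where T: "T \<subseteq> ?D" "card T = k" "blue_clique c T"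
    using clique_in[of ?D] by auto
  obtain S where S: "S \<subseteq> A" "card S = k" "blue_clique c S"
    using clique_in assms(5,6) by blast
  have "S \<union> T \<subseteq> X" using S(1) T(1) \<open>?D \<subseteq> X\<close> assms(5) by blast
  then have "finite S" "finite T" using \<open>finite X\<close> finite_subset by auto
  moreover have "S \<inter> T = {}" using S(1) T(1) by (auto simp: common_blue_nbhd_def)
  ultimately have "card (S \<union> T) = 2 * k" using S(2) T(2) by (simp add: card_Un_disjoint)
  moreover have "blue_clique c (S \<union> T)"
    using S T by (intro blue_clique_Un) (auto simp: common_blue_nbhd_def subset_iff)
  ultimately show False using no_clique \<open>S \<union> T \<subseteq> X\<close> by blast
qed

lemma red_walk_ends_subset: "red_walk_ends c B t \<subseteq> B t"
  unfolding red_walk_ends_def by auto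

lemma red_walk_ends_0: "red_walk_ends c B 0 = B 0"
proof
  show "B 0 \<subseteq> red_walk_ends c B 0"
  proof
    fix v assume "v \<in> B 0"
    then show "v \<in> red_walk_ends c B 0"
      unfolding red_walk_ends_def by (intro CollectI exI[of _ "\<lambda>_. v"]) auto
  qed
qed (rule red_walk_ends_subset)

lemma red_walk_ends_Suc:
  assumes "B (Suc t) \<subseteq> X" "B (Suc t) \<inter> B t = {}"
  shows "B (Suc t) - common_blue_nbhd c X (red_walk_ends c B t) \<subseteq> red_walk_ends c B (Suc t)"
proof
  fix v assume v: "v \<in> B (Suc t) - common_blue_nbhd c X (red_walk_ends c B t)"
  have "v \<notin> red_walk_ends c B t" using v assms(2) red_walk_ends_subset by blast
  then obtain u where "u \<in> red_walk_ends c B t" "\<not> edge_colour c u v"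
    using v assms(1) unfolding common_blue_nbhd_def by blast
  then obtain w where w: "w t = u" "\<forall>i\<le>t. w i \<in> B i" "\<forall>i<t. \<not> edge_colour c (w i) (w (Suc i))"
    unfolding red_walk_ends_def by blast
  let ?w = "w(Suc t := v)"
  have "\<forall>i\<le>Suc t. ?w i \<in> B i" using w(2) v by (auto simp: le_Suc_eq)
  moreover have "\<forall>i<Suc t. \<not> edge_colour c (?w i) (?w (Suc i))"
    using w(1,3) \<open>\<not> edge_colour c u v\<close> by (auto simp: less_Suc_eq)
  ultimately show "v \<in> red_walk_ends c B (Suc t)"
    unfolding red_walk_ends_def by (intro CollectI exI[of _ ?w]) auto
qed

lemma card_red_walk_ends:
  assumes "finite X"
    and blocks: "\<And>t. t \<le> T \<Longrightarrow> B t \<subseteq> X \<and> card (B t) = 2 * N"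
    and disjoint: "\<And>t. t < T \<Longrightarrow> B (Suc t) \<inter> B t = {}"
    and sparse: "\<And>A. A \<subseteq> X \<Longrightarrow> N \<le> card A \<Longrightarrow> card (common_blue_nbhd c X A) < N"
  shows "N \<le> card (red_walk_ends c B T)"
proof -
  have "N \<le> card (red_walk_ends c B t)" if "t \<le> T" for t
    using that
  proof (induction t)
    case 0
    then show ?case using blocks[of 0] by (simp add: red_walk_ends_0)
  next
    case (Suc t)
    let ?C = "red_walk_ends c B t"
    let ?D = "common_blue_nbhd c X ?C"
    have B_sub: "B (Suc t) \<subseteq> X" and B_card: "card (B (Suc t)) = 2 * N"
      using blocks[OF Suc.prems] by auto
    have "?C \<subseteq> X" using red_walk_ends_subset[of c B t] blocks[of t] Suc.prems by auto
    then have "card ?D < N" using sparse Suc.IH Suc.prems by simp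
    have "finite ?D" using finite_subset[OF common_blue_nbhd_subset \<open>finite X\<close>] .
    have "finite (red_walk_ends c B (Suc t))"
      using finite_subset[OF red_walk_ends_subset[of c B "Suc t"] finite_subset[OF B_sub \<open>finite X\<close>]] .
    have "2 * N - card ?D \<le> card (B (Suc t) - ?D)"
      using diff_card_le_card_Diff[OF \<open>finite ?D\<close>, of "B (Suc t)"] B_card by simp
    also have "\<dots> \<le> card (red_walk_ends c B (Suc t))"
      using disjoint[of t] Suc.prems
      by (intro card_mono[OF \<open>finite (red_walk_ends c B (Suc t))\<close> red_walk_ends_Suc[of B t X c, OF B_sub]]) simp
    finally show ?case using \<open>card ?D < N\<close> by linarith
  qed
  then show ?thesis by simp
qed

lemma red_walk_through_blocks:
  assumes s: "bij_betw s {..<m} {..<m}" and "finite X" and "0 < m"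
    and blocks: "\<And>r. r < m \<Longrightarrow> B r \<subseteq> X \<and> card (B r) = 2 * N"
    and ordered: "\<And>r r' x y. r < r' \<Longrightarrow> r' < m \<Longrightarrow> x \<in> B r \<Longrightarrow> y \<in> B r' \<Longrightarrow> x < y"
    and sparse: "\<And>A. A \<subseteq> X \<Longrightarrow> N \<le> card A \<Longrightarrow> card (common_blue_nbhd c X A) < N"
  shows "\<exists>w. (\<forall>t<m. w t \<in> B (s t)) \<and> (\<forall>t. Suc t < m \<longrightarrow> \<not> edge_colour c (w t) (w (Suc t)))"
proof -
  have "0 < N" using sparse[of "{}"] by (cases "N = 0") auto
  have s_less: "s t < m" if "t < m" for t using s that bij_betwE by blast
  have disjoint: "B r \<inter> B r' = {}" if "r \<noteq> r'" "r < m" "r' < m" for r r'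
  proof (cases "r < r'")
    case True
    from ordered[OF True that(3)] show ?thesis by (meson disjoint_iff less_irrefl)
  next
    case False
    with that(1) have "r' < r" by simp
    from ordered[OF this that(2)] show ?thesis by (meson disjoint_iff less_irrefl)
  qed
  have s_step: "s (Suc t) \<noteq> s t" if "Suc t < m" for t
  proof
    assume "s (Suc t) = s t"
    then have "Suc t = t" by (rule inj_onD[OF bij_betw_imp_inj_on[OF s]]) (use that in auto)
    then show False by simp
  qed
  have "N \<le> card (red_walk_ends c (B \<circ> s) (m - 1))"
  proof (rule card_red_walk_ends[OF \<open>finite X\<close> _ _ sparse])
    fix t assume "t \<le> m - 1"
    with \<open>0 < m\<close> have "t < m" by simp
    then show "(B \<circ> s) t \<subseteq> X \<and> card ((B \<circ> s) t) = 2 * N" using blocks[OF s_less] by simp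
  next
    fix t assume "t < m - 1"
    then have "Suc t < m" by simp
    then show "(B \<circ> s) (Suc t) \<inter> (B \<circ> s) t = {}"
      using disjoint[OF s_step] s_less by simp
  qed
  with \<open>0 < N\<close> obtain v where "v \<in> red_walk_ends c (B \<circ> s) (m - 1)"
    by (metis card.empty ex_in_conv not_le)
  then obtain w where "\<forall>i\<le>m - 1. w i \<in> B (s i)"
    "\<forall>i<m - 1. \<not> edge_colour c (w i) (w (Suc i))"
    unfolding red_walk_ends_def by auto
  with \<open>0 < m\<close> show ?thesis by (intro exI[of _ w]) auto
qed

lemma red_path_from_blocks:
  assumes s: "bij_betw s {..<m} {..<m}" and "finite X"
    and blocks: "\<And>r. r < m \<Longrightarrow> B r \<subseteq> X \<and> card (B r) = 2 * N"
    and ordered: "\<And>r r' x y. r < r' \<Longrightarrow> r' < m \<Longrightarrow> x \<in> B r \<Longrightarrow> y \<in> B r' \<Longrightarrow> x < y"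
    and sparse: "\<And>A. A \<subseteq> X \<Longrightarrow> N \<le> card A \<Longrightarrow> card (common_blue_nbhd c X A) < N"
  shows "red_path_in m s c X"
proof (cases "m = 0")
  case True
  then show ?thesis unfolding red_path_in_def by simp
next
  case False
  then have "0 < m" by simp
  have "\<exists>w. (\<forall>t<m. w t \<in> B (s t)) \<and> (\<forall>t. Suc t < m \<longrightarrow> \<not> edge_colour c (w t) (w (Suc t)))"
    by (rule red_walk_through_blocks[where B = B, OF s \<open>finite X\<close> \<open>0 < m\<close> blocks ordered sparse])
  then obtain w where w_B: "\<And>t. t < m \<Longrightarrow> w t \<in> B (s t)"
    and w_red: "\<And>t. Suc t < m \<Longrightarrow> \<not> edge_colour c (w t) (w (Suc t))" by blast
  define f where "f r = w (inv_into {..<m} s r)" for r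
  have f_s: "f (s t) = w t" if "t < m" for t
    unfolding f_def using bij_betw_inv_into_left[OF s] that by simp
  have f_B: "f r \<in> B r" if "r < m" for r
  proof -
    have "r \<in> s ` {..<m}" using bij_betw_imp_surj_on[OF s] that by simp
    then obtain t where "t < m" "r = s t" by auto
    then show ?thesis using f_s w_B by simp
  qed
  have f_less: "f i < f j" if "i < j" "j < m" for i j
    using that by (meson f_B less_trans ordered)
  show ?thesis
    unfolding red_path_in_def
  proof (intro exI conjI allI impI)
    fix i assume "i < m"
    then show "f i \<in> X" using f_B blocks by blast
  next
    fix i j assume "i < j \<and> j < m"
    then show "f i < f j" using f_less by blast
  next
    fix i j assume ij: "i < j \<and> j < m \<and> path_edges m s i j"
    then obtain t where t: "Suc t < m" "{i, j} = {s t, s (Suc t)}"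
      unfolding path_edges_def by blast
    have "\<not> edge_colour c (f (s t)) (f (s (Suc t)))" using w_red t(1) f_s by simp
    moreover have "(i = s t \<and> j = s (Suc t)) \<or> (i = s (Suc t) \<and> j = s t)"
      using t(2) by (simp add: doubleton_eq_iff)
    ultimately have "\<not> edge_colour c (f i) (f j)" by (metis edge_colour_commute)
    moreover have "f i < f j" using f_less ij by blast
    ultimately show "\<not> c (f i) (f j)" unfolding edge_colour_def by simp
  qed
qed

lemma ordered_blocks:
  fixes X :: "nat set"
  assumes "finite X" "m * L \<le> card X"
  obtains B where "\<And>r. r < m \<Longrightarrow> B r \<subseteq> X \<and> card (B r) = L"
    and "\<And>r r' x y. r < r' \<Longrightarrow> r' < m \<Longrightarrow> x \<in> B r \<Longrightarrow> y \<in> B r' \<Longrightarrow> x < y"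
proof
  let ?e = "enumerate X"
  let ?B = "\<lambda>r. ?e ` {r * L..<r * L + L}"
  have block_end: "r * L + L \<le> card X" if r: "r < m" for r
    using r assms(2) by (metis add.commute mult_Suc le_trans mult_le_mono1 Suc_leI)
  show "?B r \<subseteq> X \<and> card (?B r) = L" if r: "r < m" for r
  proof
    show "?B r \<subseteq> X"
      using block_end[OF r] finite_enumerate_in_set[OF assms(1)] by auto
    have "{r * L..<r * L + L} \<subseteq> {..<card X}" using block_end[OF r] by auto
    then have "inj_on ?e {r * L..<r * L + L}"
      using bij_betw_imp_inj_on[OF finite_bij_enumerate[OF assms(1)]] inj_on_subset by blast
    then show "card (?B r) = L" by (simp add: card_image)
  qed
  show "x < y" if hyps: "r < r'" "r' < m" "x \<in> ?B r" "y \<in> ?B r'" for r r' x y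
  proof -
    obtain i j where "x = ?e i" "y = ?e j" "i < r * L + L" "r' * L \<le> j" "j < r' * L + L"
      using hyps(3,4) by auto
    moreover have "r * L + L \<le> r' * L"
      using hyps(1) by (metis add.commute mult_Suc mult_le_mono1 Suc_leI)
    ultimately show "x < y"
      using block_end[OF hyps(2)] finite_enumerate_mono[OF _ assms(1)] by simp
  qed
qed

lemma clique_or_path_double:
  assumes s: "bij_betw s {..<m} {..<m}" and IH: "clique_or_path m s k N"
  shows "clique_or_path m s (2 * k) (2 * m * N)"
  unfolding clique_or_path_def
proof (intro allI impI)
  fix c :: "nat \<Rightarrow> nat \<Rightarrow> bool" and X :: "nat set"
  assume "finite X" "2 * m * N \<le> card X"
  then obtain B where blocks: "\<And>r. r < m \<Longrightarrow> B r \<subseteq> X \<and> card (B r) = 2 * N"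
    and ordered: "\<And>r r' x y. r < r' \<Longrightarrow> r' < m \<Longrightarrow> x \<in> B r \<Longrightarrow> y \<in> B r' \<Longrightarrow> x < y"
    using ordered_blocks[of X m "2 * N"] by (auto simp: mult.commute mult.left_commute)
  show "(\<exists>S\<subseteq>X. card S = 2 * k \<and> blue_clique c S) \<or> red_path_in m s c X"
  proof (rule ccontr)
    assume "\<not> ?thesis"
    then have no_clique: "\<not> (\<exists>S\<subseteq>X. card S = 2 * k \<and> blue_clique c S)"
      and no_path: "\<not> red_path_in m s c X" by simp_all
    have "red_path_in m s c X"
      by (rule red_path_from_blocks[OF s \<open>finite X\<close> blocks ordered
            common_blue_nbhd_small[OF IH \<open>finite X\<close> no_clique no_path]])
    with no_path show False by contradiction
  qed
qed

lemma clique_or_path_1_1: "clique_or_path m s 1 1"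
  unfolding clique_or_path_def
proof (intro allI impI disjI1)
  fix c :: "nat \<Rightarrow> nat \<Rightarrow> bool" and X :: "nat set"
  assume "finite X" "1 \<le> card X"
  then obtain x where "x \<in> X" by fastforce
  then show "\<exists>S\<subseteq>X. card S = 1 \<and> blue_clique c S"
    by (intro exI[of _ "{x}"]) (simp add: blue_clique_def)
qed

lemma clique_or_path_power:
  assumes "bij_betw s {..<m} {..<m}"
  shows "clique_or_path m s (2 ^ a) ((2 * m) ^ a)"
proof (induction a)
  case 0
  then show ?case using clique_or_path_1_1 by simp
next
  case (Suc a)
  then show ?case using clique_or_path_double[OF assms] by (simp add: mult.assoc)
qed

lemma mono_copy_complete_if_blue_clique:
  assumes "S \<subseteq> {..<N}" "blue_clique c S" "n \<le> card S"
  shows "mono_copy n complete_edges N c True"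
proof -
  have "finite S" using assms(1) finite_subset by blast
  let ?e = "enumerate S"
  have e_in: "?e i \<in> S" if "i < n" for i
    using finite_enumerate_in_set[OF \<open>finite S\<close>] that assms(3) by simp
  have e_less: "?e i < ?e j" if "i < j" "j < n" for i j
    using finite_enumerate_mono[OF that(1) \<open>finite S\<close>] that(2) assms(3) by simp
  show ?thesis
    unfolding mono_copy_def
  proof (intro exI conjI allI impI)
    fix i assume "i < n"
    then show "?e i < N" using e_in assms(1) by blast
  next
    fix i j assume "i < j \<and> j < n"
    then show "?e i < ?e j" using e_less by blast
  next
    fix i j assume "i < j \<and> j < n \<and> complete_edges i j"
    then show "c (?e i) (?e j) = True"
      using e_in e_less assms(2) unfolding blue_clique_def by (meson less_trans)
  qed
qed

lemma mono_copy_path_iff_red_path: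
  "mono_copy m (path_edges m s) N c False \<longleftrightarrow> red_path_in m s c {..<N}"
  unfolding mono_copy_def red_path_in_def by simp

lemma ordered_ramsey_le_if_clique_or_path:
  assumes "clique_or_path m s k N" "n \<le> k"
  shows "ordered_ramsey n complete_edges m (path_edges m s) \<le> N"
  unfolding ordered_ramsey_def
proof (rule Least_le, rule allI)
  fix c
  have "(\<exists>S\<subseteq>{..<N}. card S = k \<and> blue_clique c S) \<or> red_path_in m s c {..<N}"
    using clique_or_pathD[OF assms(1)] by simp
  then show "mono_copy n complete_edges N c True \<or> mono_copy m (path_edges m s) N c False"
  proof
    assume "\<exists>S\<subseteq>{..<N}. card S = k \<and> blue_clique c S"
    then obtain S where "S \<subseteq> {..<N}" "card S = k" "blue_clique c S" by blast
    then show ?thesis using mono_copy_complete_if_blue_clique[of S N c n] assms(2) by simp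
  qed (simp add: mono_copy_path_iff_red_path)
qed

lemma le_two_power_ceiling_log:
  assumes "1 \<le> n"
  shows "n \<le> 2 ^ nat \<lceil>log 2 (real n)\<rceil>"
proof -
  have "real n = 2 powr log 2 (real n)" using assms by simp
  also have "\<dots> \<le> 2 powr real (nat \<lceil>log 2 (real n)\<rceil>)"
    using assms by (intro powr_mono) linarith+
  also have "\<dots> = 2 ^ nat \<lceil>log 2 (real n)\<rceil>" by (simp add: powr_realpow)
  finally have "real n \<le> real (2 ^ nat \<lceil>log 2 (real n)\<rceil>)" by simp
  then show ?thesis by linarith
qed

theorem theoremt:
  fixes n m :: nat and s :: "nat \<Rightarrow> nat"
  assumes "n \<ge> 1" and "m \<ge> 1" and "bij_betw s {..<m} {..<m}"
  shows "ordered_ramsey n complete_edges m (path_edges m s)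
           \<le> 2 ^ (nat \<lceil>log 2 (real n)\<rceil> * (nat \<lceil>log 2 (real m)\<rceil> + 1))"
proof -
  define a where "a = nat \<lceil>log 2 (real n)\<rceil>"
  define b where "b = nat \<lceil>log 2 (real m)\<rceil>"
  have "n \<le> 2 ^ a" unfolding a_def using le_two_power_ceiling_log assms(1) .
  have "m \<le> 2 ^ b" unfolding b_def using le_two_power_ceiling_log assms(2) .
  have "ordered_ramsey n complete_edges m (path_edges m s) \<le> (2 * m) ^ a"
    using ordered_ramsey_le_if_clique_or_path[OF clique_or_path_power[OF assms(3)] \<open>n \<le> 2 ^ a\<close>] .
  also have "\<dots> \<le> (2 * 2 ^ b) ^ a" using \<open>m \<le> 2 ^ b\<close> by (intro power_mono) auto
  also have "\<dots> = 2 ^ (a * (b + 1))" by (simp add: algebra_simps flip: power_mult power_add)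
  finally show ?thesis unfolding a_def b_def .
qed

end
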